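(* Assume (A1) and (A2'), and let $\alpha\ge\frac12\max\{0,\max_{j\in\Gamma_h}(V(x_j)+\omega)\}+\frac12$. Let $u_h^0\in\mathcal S_{h,p+1}$. Then for every $\tau>0$ and every $n\ge0$ the fully discrete GFALM iterates satisfy $$Q_h(u_h^{n+1})-Q_h(u_h^n)\le-\frac{\tau^2\|\widetilde\mu_h^{n+1}\|_{1,h}^2+4\tau\|\widetilde\mu_h^{n+1}\|_h^2}{2\|\widetilde u_h^{n+1}\|_{h,p+1}^2}.$$
   Context: Fully discrete setting ($d=1$). $\Omega=[x_0,x_0+L]$, $M>0$ even, $h=L/M$, grid $x_j=x_0+jh$, $j\in\Gamma_h=\{0,\dots,M-1\}$, periodic boundary conditions; $X_h=\mathbb R^M$. Let $\varphi_j(x)=\frac1M\sum_{l=-M/2}^{M/2}\frac1{a_l}e^{\mathrm il\sigma(x-x_j)}$ with $a_l=1$ for $|l|<M/2$, $a_l=2$ for $|l|=M/2$, $\sigma=2\pi/L$; $(\mathbf D_{xx})_{j,l}=\varphi_l''(x_j)$ ($-\mathbf D_{xx}$ symmetric positive semidefinite). $\langle u_h,v_h\rangle_h=h\sum_j u_jv_j$, $\|u_h\|_h^2=\langle u_h,u_h\rangle_h$, $|u_h|_{1,h}^2=\langle-\mathbf D_{xx}u_h,u_h\rangle_h$, $\|u_h\|_{1,h}^2=\|u_h\|_h^2+|u_h|_{1,h}^2$, $\|u_h\|_{h,q}=(h\sum_j|u_j|^q)^{1/q}$. With $V_j=V(x_j)$: $Q_h(u_h)=\frac12|u_h|_{1,h}^2+h\sum_jV_j|u_j|^2+\omega\|u_h\|_h^2$;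 $\mathcal S_{h,p+1}=\{u_h:\|u_h\|_{h,p+1}=1\}$; $\widetilde\lambda_h(u_h)=Q_h(u_h)/\|u_h\|_{h,p+1}^{p+1}$. Assumption (A1): $1<p<\infty$, $V\ge0$ bounded. $\lambda_0':=\inf\{\frac12|u_h|_{1,h}^2+h\sum_jV_j|u_j|^2:\|u_h\|_h=1\}$; (A2'): $\omega>-\lambda_0'$. Fully discrete GFALM: for $j\in\Gamma_h$, $\frac1\tau(\widetilde u_j^{n+1}-u_j^n)=-\widetilde\mu_j^{n+1}$, $\widetilde\mu_j^{n+1}=-\frac12(\mathbf D_{xx}\widetilde u_h^{n+1})_j+(V_j+\omega-\widetilde\lambda_h(u_h^n)|u_j^n|^{p-1})u_j^n+\alpha(\widetilde u_j^{n+1}-u_j^n)$, and $u_j^{n+1}=\widetilde u_j^{n+1}/\|\widetilde u_h^{n+1}\|_{h,p+1}$. *)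

theory Defs
  imports Complex_Main
begin

text \<open>Grid functions u_h in X_h = R^M are represented as nat => real; only the
values at indices 0..M-1 are used.\<close>

definition hstep :: "real \<Rightarrow> nat \<Rightarrow> real" where
  "hstep L M = L / real M"

definition grid :: "real \<Rightarrow> real \<Rightarrow> nat \<Rightarrow> nat \<Rightarrow> real" where
  "grid x0 L M j = x0 + real j * hstep L M"

definition acoef :: "nat \<Rightarrow> int \<Rightarrow> real" where
  "acoef M l = (if \<bar>l\<bar> = int M div 2 then 2 else 1)"

text \<open>Second derivative of the trigonometric cardinal function phi_l evaluated at x_j:
  phi_l''(x) = (1/M) * sum_k (1/a_k) (i k sigma)^2 exp(i k sigma (x - x_l)), sigma = 2 pi / L.
  This value is real; we take its real part to land in real.\<close>
definition Dxx :: "real \<Rightarrow> real \<Rightarrow> nat \<Rightarrow> nat \<Rightarrow> nat \<Rightarrow> real" where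
  "Dxx x0 L M j l = Re ((1 / of_nat M) *
     (\<Sum>k\<in>{-(int M div 2)..int M div 2}.
        complex_of_real (1 / acoef M k) * (\<i> * of_int k * complex_of_real (2 * pi / L))\<^sup>2 *
        exp (\<i> * of_int k * complex_of_real (2 * pi / L) *
             complex_of_real (grid x0 L M j - grid x0 L M l))))"

definition Dxx_app :: "real \<Rightarrow> real \<Rightarrow> nat \<Rightarrow> (nat \<Rightarrow> real) \<Rightarrow> nat \<Rightarrow> real" where
  "Dxx_app x0 L M u j = (\<Sum>l<M. Dxx x0 L M j l * u l)"

definition iph :: "real \<Rightarrow> nat \<Rightarrow> (nat \<Rightarrow> real) \<Rightarrow> (nat \<Rightarrow> real) \<Rightarrow> real" where
  "iph L M u v = hstep L M * (\<Sum>j<M. u j * v j)"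

definition normh :: "real \<Rightarrow> nat \<Rightarrow> (nat \<Rightarrow> real) \<Rightarrow> real" where
  "normh L M u = sqrt (iph L M u u)"

definition semi1h_sq :: "real \<Rightarrow> real \<Rightarrow> nat \<Rightarrow> (nat \<Rightarrow> real) \<Rightarrow> real" where
  "semi1h_sq x0 L M u = iph L M (\<lambda>j. - Dxx_app x0 L M u j) u"

definition norm1h_sq :: "real \<Rightarrow> real \<Rightarrow> nat \<Rightarrow> (nat \<Rightarrow> real) \<Rightarrow> real" where
  "norm1h_sq x0 L M u = (normh L M u)\<^sup>2 + semi1h_sq x0 L M u"

definition normhq :: "real \<Rightarrow> nat \<Rightarrow> real \<Rightarrow> (nat \<Rightarrow> real) \<Rightarrow> real" where
  "normhq L M q u = (hstep L M * (\<Sum>j<M. \<bar>u j\<bar> powr q)) powr (1 / q)"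

definition Qh :: "real \<Rightarrow> real \<Rightarrow> nat \<Rightarrow> (real \<Rightarrow> real) \<Rightarrow> real \<Rightarrow> (nat \<Rightarrow> real) \<Rightarrow> real" where
  "Qh x0 L M V \<omega> u = semi1h_sq x0 L M u / 2
     + hstep L M * (\<Sum>j<M. V (grid x0 L M j) * \<bar>u j\<bar>\<^sup>2) + \<omega> * (normh L M u)\<^sup>2"

definition lambda_tilde :: "real \<Rightarrow> real \<Rightarrow> nat \<Rightarrow> (real \<Rightarrow> real) \<Rightarrow> real \<Rightarrow> real \<Rightarrow> (nat \<Rightarrow> real) \<Rightarrow> real" where
  "lambda_tilde x0 L M V \<omega> p u = Qh x0 L M V \<omega> u / (normhq L M (p + 1) u) powr (p + 1)"

definition lambda0' :: "real \<Rightarrow> real \<Rightarrow> nat \<Rightarrow> (real \<Rightarrow> real) \<Rightarrow> real" where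
  "lambda0' x0 L M V = Inf {semi1h_sq x0 L M u / 2 + hstep L M * (\<Sum>j<M. V (grid x0 L M j) * \<bar>u j\<bar>\<^sup>2)
                          | u. normh L M u = 1}"

end

(* Write Q_h(w) = h (<K w, w>/2 + <W w, w>) with the symmetric positive semidefinite matrix
   K = -D_xx and W_j = V_j + omega.  For t = v - tau mu, the defining equation of mu turns
   Q_h(t) - Q_h(v) into an exact expression in mu (the cross terms <K v, mu> and <K mu, v>
   cancel by symmetry), and the choice of alpha makes tau^2 <(2 alpha - W) mu, mu> dominate
   tau^2 |mu|_h^2.  What remains is the multiplier term: since |v|_{h,p+1} = 1 and
   lambda~(v) = Q_h(v) >= 0 by (A2'), it equals Q_h(v) (2 <|v|^(p-1) v, t>_h - 1), and
   Hoelder's inequality bounds this by Q_h(v) (2 N - 1) <= Q_h(v) N^2 with N = |t|_{h,p+1}.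
   Normalising t rescales the quadratic Q_h by 1 / N^2. *)

theory Submission
  imports Defs "HOL-Analysis.Convex"
begin

section \<open>The spectral differentiation matrix\<close>

definition neg_Dxx_symbol :: "real \<Rightarrow> nat \<Rightarrow> int \<Rightarrow> real" where
  "neg_Dxx_symbol L M k = (of_int k * (2 * pi / L))\<^sup>2 / acoef M k"

lemma neg_Dxx_symbol_nonneg: "0 \<le> neg_Dxx_symbol L M k"
  unfolding neg_Dxx_symbol_def acoef_def by simp

lemma neg_Dxx_eq_cos_sum:
  "- Dxx x0 L M j l = (\<Sum>k\<in>{-(int M div 2)..int M div 2}.
      neg_Dxx_symbol L M k * cos (of_int k * (2 * pi / L) * (grid x0 L M j - grid x0 L M l))) / real M"
proof -
  have summand: "Re (complex_of_real (1 / acoef M k) * (\<i> * of_int k * complex_of_real (2 * pi / L))\<^sup>2 *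
          exp (\<i> * of_int k * complex_of_real (2 * pi / L) * complex_of_real d))
        = - (neg_Dxx_symbol L M k * cos (of_int k * (2 * pi / L) * d))" for k d
  proof -
    have "\<i> * of_int k * complex_of_real (2 * pi / L) * complex_of_real d
          = \<i> * complex_of_real (of_int k * (2 * pi / L) * d)"
      by simp
    moreover have "(\<i> * of_int k * complex_of_real (2 * pi / L))\<^sup>2
                   = - complex_of_real ((of_int k * (2 * pi / L))\<^sup>2)"
      by (simp add: power2_eq_square algebra_simps)
    ultimately show ?thesis
      unfolding neg_Dxx_symbol_def by (simp add: Re_exp)
  qed
  have "Re (1 / of_nat M * z) = Re z / real M" for z
    by (simp add: Re_divide_of_nat)
  then have "Dxx x0 L M j l = Re (\<Sum>k\<in>{-(int M div 2)..int M div 2}.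
        complex_of_real (1 / acoef M k) * (\<i> * of_int k * complex_of_real (2 * pi / L))\<^sup>2 *
        exp (\<i> * of_int k * complex_of_real (2 * pi / L) *
             complex_of_real (grid x0 L M j - grid x0 L M l))) / real M"
    unfolding Dxx_def .
  then show ?thesis
    unfolding Re_sum summand by (simp add: sum_negf)
qed

lemma Dxx_commute: "Dxx x0 L M j l = Dxx x0 L M l j"
proof -
  have cos_flip:
    "cos (c * (grid x0 L M j - grid x0 L M l)) = cos (c * (grid x0 L M l - grid x0 L M j))" for c
    by (metis cos_minus minus_diff_eq mult_minus_right)
  have "- Dxx x0 L M j l = - Dxx x0 L M l j"
    unfolding neg_Dxx_eq_cos_sum cos_flip ..
  then show ?thesis by simp
qed

lemma cos_diff_quadratic_form:
  fixes \<theta> v :: "'a \<Rightarrow> real"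
  shows "(\<Sum>j\<in>A. (\<Sum>l\<in>A. cos (\<theta> j - \<theta> l) * v l) * v j)
   = (\<Sum>j\<in>A. cos (\<theta> j) * v j)\<^sup>2 + (\<Sum>j\<in>A. sin (\<theta> j) * v j)\<^sup>2"
proof -
  have "(\<Sum>j\<in>A. (\<Sum>l\<in>A. cos (\<theta> j - \<theta> l) * v l) * v j)
        = (\<Sum>j\<in>A. \<Sum>l\<in>A. (cos (\<theta> j) * v j) * (cos (\<theta> l) * v l)
                            + (sin (\<theta> j) * v j) * (sin (\<theta> l) * v l))"
    unfolding sum_distrib_right by (intro sum.cong refl) (simp add: cos_diff algebra_simps)
  then show ?thesis
    by (simp add: power2_eq_square sum_product sum.distrib)
qed

lemma neg_Dxx_quadratic_form_nonneg:
  "0 \<le> (\<Sum>j<M. (\<Sum>l<M. - Dxx x0 L M j l * v l) * v j)"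
proof -
  let ?K = "{-(int M div 2)..int M div 2}"
  let ?\<theta> = "\<lambda>k j. of_int k * (2 * pi / L) * grid x0 L M j"
  have "(\<Sum>j<M. (\<Sum>l<M. - Dxx x0 L M j l * v l) * v j)
        = (\<Sum>k\<in>?K. neg_Dxx_symbol L M k *
             (\<Sum>j<M. (\<Sum>l<M. cos (?\<theta> k j - ?\<theta> k l) * v l) * v j)) / real M"
    unfolding neg_Dxx_eq_cos_sum
    by (simp add: right_diff_distrib sum_divide_distrib sum_distrib_left sum_distrib_right
        algebra_simps sum.swap[of _ ?K])
  also have "\<dots> = (\<Sum>k\<in>?K. neg_Dxx_symbol L M k *
             ((\<Sum>j<M. cos (?\<theta> k j) * v j)\<^sup>2 + (\<Sum>j<M. sin (?\<theta> k j) * v j)\<^sup>2)) / real M"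
    by (simp only: cos_diff_quadratic_form)
  finally show ?thesis
    by (simp add: sum_nonneg neg_Dxx_symbol_nonneg)
qed

section \<open>Quadratic energies of symmetric matrices\<close>

definition quadratic_energy ::
  "nat \<Rightarrow> (nat \<Rightarrow> nat \<Rightarrow> real) \<Rightarrow> (nat \<Rightarrow> real) \<Rightarrow> (nat \<Rightarrow> real) \<Rightarrow> real" where
  "quadratic_energy M K W w = (\<Sum>j<M. (\<Sum>l<M. K j l * w l) * w j / 2 + W j * (w j)\<^sup>2)"

lemma quadratic_form_commute:
  fixes K :: "nat \<Rightarrow> nat \<Rightarrow> real" and w z :: "nat \<Rightarrow> real"
  assumes "\<And>j l. K j l = K l j"
  shows "(\<Sum>j<M. (\<Sum>l<M. K j l * w l) * z j) = (\<Sum>j<M. (\<Sum>l<M. K j l * z l) * w j)"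
proof -
  have "(\<Sum>j<M. (\<Sum>l<M. K j l * w l) * z j) = (\<Sum>j<M. \<Sum>l<M. K j l * w l * z j)"
    by (simp add: sum_distrib_right)
  also have "\<dots> = (\<Sum>l<M. \<Sum>j<M. K j l * w l * z j)"
    by (rule sum.swap)
  also have "\<dots> = (\<Sum>l<M. (\<Sum>j<M. K l j * z j) * w l)"
    by (simp add: assms sum_distrib_left sum_distrib_right mult_ac)
  finally show ?thesis .
qed

lemma quadratic_energy_cong:
  assumes "\<And>j. j < M \<Longrightarrow> w j = z j"
  shows "quadratic_energy M K W w = quadratic_energy M K W z"
proof -
  have "(\<Sum>l<M. K j l * w l) = (\<Sum>l<M. K j l * z l)" for j
    using assms by (intro sum.cong) auto
  then show ?thesis
    unfolding quadratic_energy_def using assms by (intro sum.cong) auto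
qed

lemma quadratic_energy_scale:
  "quadratic_energy M K W (\<lambda>j. c * w j) = c\<^sup>2 * quadratic_energy M K W w"
  unfolding quadratic_energy_def
  by (simp add: sum_distrib_left power2_eq_square algebra_simps)

lemma quadratic_energy_step:
  assumes K_sym: "\<And>j l. K j l = K l j"
    and t: "\<And>j. j < M \<Longrightarrow> t j = v j - \<tau> * m j"
    and m: "\<And>j. j < M \<Longrightarrow> m j = (\<Sum>l<M. K j l * t l) / 2 + W j * v j - g j + \<alpha> * (t j - v j)"
  shows "quadratic_energy M K W t = quadratic_energy M K W v
           - 2 * \<tau> * (\<Sum>j<M. (m j)\<^sup>2) - \<tau>\<^sup>2 / 2 * (\<Sum>j<M. (\<Sum>l<M. K j l * m l) * m j)
           - \<tau>\<^sup>2 * (\<Sum>j<M. (2 * \<alpha> - W j) * (m j)\<^sup>2) - 2 * \<tau> * (\<Sum>j<M. g j * m j)"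
proof -
  define a where "a j = (\<Sum>l<M. K j l * v l)" for j
  define b where "b j = (\<Sum>l<M. K j l * m l)" for j
  have Kt: "(\<Sum>l<M. K j l * t l) = a j - \<tau> * b j" for j
  proof -
    have "(\<Sum>l<M. K j l * t l) = (\<Sum>l<M. K j l * v l - \<tau> * (K j l * m l))"
      by (intro sum.cong refl) (simp add: t algebra_simps)
    then show ?thesis
      unfolding a_def b_def by (simp add: sum_subtractf sum_distrib_left)
  qed
  \<comment> \<open>exact up to the last term, whose sum vanishes by symmetry of K\<close>
  have pointwise: "(a j - \<tau> * b j) * t j / 2 + W j * (t j)\<^sup>2
      = (a j * v j / 2 + W j * (v j)\<^sup>2) - 2 * \<tau> * (m j)\<^sup>2 - \<tau>\<^sup>2 / 2 * (b j * m j)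
        - \<tau>\<^sup>2 * ((2 * \<alpha> - W j) * (m j)\<^sup>2) - 2 * \<tau> * (g j * m j)
        + \<tau> / 2 * (a j * m j - b j * v j)" if "j < M" for j
  proof -
    have a_eq: "a j = 2 * m j + \<tau> * b j - 2 * W j * v j + 2 * g j + 2 * \<alpha> * \<tau> * m j"
      using m[OF that] t[OF that] unfolding Kt by (simp add: field_simps)
    show ?thesis
      unfolding t[OF that] a_eq by (simp add: field_simps power2_eq_square)
  qed
  have "(\<Sum>j<M. a j * m j - b j * v j) = 0"
    using quadratic_form_commute[OF K_sym, where w = v and z = m]
    unfolding a_def b_def by (simp add: sum_subtractf)
  then have cross_terms: "(\<Sum>j<M. \<tau> / 2 * (a j * m j - b j * v j)) = 0"
    by (simp only: sum_distrib_left[symmetric] mult_zero_right)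
  have "quadratic_energy M K W t
      = (\<Sum>j<M. (a j * v j / 2 + W j * (v j)\<^sup>2) - 2 * \<tau> * (m j)\<^sup>2 - \<tau>\<^sup>2 / 2 * (b j * m j)
          - \<tau>\<^sup>2 * ((2 * \<alpha> - W j) * (m j)\<^sup>2) - 2 * \<tau> * (g j * m j)
          + \<tau> / 2 * (a j * m j - b j * v j))"
    unfolding quadratic_energy_def Kt by (intro sum.cong refl) (simp add: pointwise)
  then show ?thesis
    using cross_terms unfolding quadratic_energy_def a_def[symmetric] b_def[symmetric]
    by (simp add: sum.distrib sum_subtractf sum_distrib_left sum_divide_distrib)
qed

lemma quadratic_energy_step_le:
  assumes K_sym: "\<And>j l. K j l = K l j"
    and t: "\<And>j. j < M \<Longrightarrow> t j = v j - \<tau> * m j"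
    and m: "\<And>j. j < M \<Longrightarrow> m j = (\<Sum>l<M. K j l * t l) / 2 + W j * v j - g j + \<alpha> * (t j - v j)"
    and \<alpha>: "\<And>j. j < M \<Longrightarrow> W j + 1 \<le> 2 * \<alpha>"
  shows "quadratic_energy M K W t \<le> quadratic_energy M K W v
           - (\<tau>\<^sup>2 * ((\<Sum>j<M. (m j)\<^sup>2) + (\<Sum>j<M. (\<Sum>l<M. K j l * m l) * m j))
              + 4 * \<tau> * (\<Sum>j<M. (m j)\<^sup>2)) / 2
           - 2 * \<tau> * (\<Sum>j<M. g j * m j)"
proof -
  have "(m j)\<^sup>2 \<le> (2 * \<alpha> - W j) * (m j)\<^sup>2" if "j < M" for j
    using \<alpha>[OF that] mult_right_mono[of 1 "2 * \<alpha> - W j" "(m j)\<^sup>2"] by simp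
  then have "(\<Sum>j<M. (m j)\<^sup>2) \<le> (\<Sum>j<M. (2 * \<alpha> - W j) * (m j)\<^sup>2)"
    by (intro sum_mono) simp
  then have "\<tau>\<^sup>2 * (\<Sum>j<M. (m j)\<^sup>2) \<le> \<tau>\<^sup>2 * (\<Sum>j<M. (2 * \<alpha> - W j) * (m j)\<^sup>2)"
    by (simp add: mult_left_mono)
  moreover have "0 \<le> \<tau>\<^sup>2 * (\<Sum>j<M. (m j)\<^sup>2)"
    by (simp add: sum_nonneg)
  ultimately show ?thesis
    using quadratic_energy_step[OF K_sym t m] by (simp add: distrib_left add_divide_distrib)
qed

section \<open>The Hoelder estimate for the multiplier term\<close>

lemma powr_abs_pred_mult_square: "\<bar>x::real\<bar> powr (p - 1) * x * x = \<bar>x\<bar> powr (p + 1)"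
proof (cases "x = 0")
  case False
  then show ?thesis
    using powr_add[of "\<bar>x\<bar>" "p - 1" 2] by (simp add: powr_numeral power2_eq_square ac_simps)
qed simp

lemma powr_abs_pred_mult_le: "\<bar>x::real\<bar> powr (p - 1) * x * y \<le> \<bar>x\<bar> powr p * \<bar>y\<bar>"
proof (cases "x = 0")
  case False
  have "\<bar>x\<bar> powr (p - 1) * x * y \<le> \<bar>x\<bar> powr (p - 1) * (\<bar>x\<bar> * \<bar>y\<bar>)"
    by (simp add: mult.assoc mult_left_mono flip: abs_mult)
  also have "\<dots> = \<bar>x\<bar> powr p * \<bar>y\<bar>"
    using False powr_add[of "\<bar>x\<bar>" "p - 1" 1] by simp
  finally show ?thesis .
qed simp

lemma Holder_sum_powr_normalized:
  fixes u v :: "'a \<Rightarrow> real"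
  assumes "finite A" and h: "0 < h" and p: "0 < p"
    and u: "h * (\<Sum>j\<in>A. \<bar>u j\<bar> powr (p + 1)) = 1"
  shows "h * (\<Sum>j\<in>A. \<bar>u j\<bar> powr p * \<bar>v j\<bar>) \<le> (h * (\<Sum>j\<in>A. \<bar>v j\<bar> powr (p + 1))) powr (1 / (p + 1))"
proof -
  define T where "T = h * (\<Sum>j\<in>A. \<bar>v j\<bar> powr (p + 1))"
  define N where "N = T powr (1 / (p + 1))"
  have "0 \<le> T"
    unfolding T_def using h by (simp add: sum_nonneg)
  show ?thesis
  proof (cases "T = 0")
    case True
    then have "\<forall>j\<in>A. v j = 0"
      unfolding T_def using h \<open>finite A\<close> by (simp add: sum_nonneg_eq_0_iff)
    then show ?thesis by simp
  next
    case False
    then have "0 < T" using \<open>0 \<le> T\<close> by simp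
    then have "0 < N" and N_powr: "N powr (p + 1) = T"
      unfolding N_def using p by (simp_all add: powr_powr)
    have Young: "\<bar>u j\<bar> powr p * (\<bar>v j\<bar> / N)
        \<le> p / (p + 1) * \<bar>u j\<bar> powr (p + 1) + \<bar>v j\<bar> powr (p + 1) / ((p + 1) * T)" for j
    proof -
      have "\<bar>u j\<bar> powr p * (\<bar>v j\<bar> / N)
          \<le> (\<bar>u j\<bar> powr p) powr ((p + 1) / p) / ((p + 1) / p) + (\<bar>v j\<bar> / N) powr (p + 1) / (p + 1)"
        using p \<open>0 < N\<close> by (intro Youngs_inequality) (auto simp: field_simps)
      also have "\<dots> = p / (p + 1) * \<bar>u j\<bar> powr (p + 1) + \<bar>v j\<bar> powr (p + 1) / ((p + 1) * T)"
        using p \<open>0 < N\<close> by (simp add: powr_powr powr_divide N_powr mult_ac)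
      finally show ?thesis .
    qed
    have "h * (\<Sum>j\<in>A. \<bar>u j\<bar> powr p * (\<bar>v j\<bar> / N))
        \<le> h * (\<Sum>j\<in>A. p / (p + 1) * \<bar>u j\<bar> powr (p + 1) + \<bar>v j\<bar> powr (p + 1) / ((p + 1) * T))"
      using h by (intro mult_left_mono sum_mono Young) auto
    also have "\<dots> = p / (p + 1) * (h * (\<Sum>j\<in>A. \<bar>u j\<bar> powr (p + 1))) + T / ((p + 1) * T)"
      unfolding T_def sum.distrib by (simp add: sum_distrib_left sum_divide_distrib algebra_simps)
    also have "\<dots> = p / (p + 1) + 1 / (p + 1)"
      using u \<open>0 < T\<close> by simp
    also have "\<dots> = 1"
      using p by (simp add: field_simps)
    finally show ?thesis
      using \<open>0 < N\<close> unfolding N_def[symmetric] T_def[symmetric]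
      by (simp add: sum_divide_distrib[symmetric] field_simps)
  qed
qed

lemma multiplier_term_le:
  fixes v t m :: "nat \<Rightarrow> real"
  assumes h: "0 < h" and p: "0 < p" and v: "h * (\<Sum>j<M. \<bar>v j\<bar> powr (p + 1)) = 1"
    and E: "0 \<le> E" and t: "\<And>j. j < M \<Longrightarrow> t j = v j - \<tau> * m j"
  shows "E - 2 * \<tau> * E * (h * (\<Sum>j<M. \<bar>v j\<bar> powr (p - 1) * v j * m j))
         \<le> E * ((h * (\<Sum>j<M. \<bar>t j\<bar> powr (p + 1))) powr (1 / (p + 1)))\<^sup>2"
proof -
  define N where "N = (h * (\<Sum>j<M. \<bar>t j\<bar> powr (p + 1))) powr (1 / (p + 1))"
  define X where "X = h * (\<Sum>j<M. \<bar>v j\<bar> powr (p - 1) * v j * t j)"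
  have "\<tau> * (\<Sum>j<M. \<bar>v j\<bar> powr (p - 1) * v j * m j)
        = (\<Sum>j<M. \<bar>v j\<bar> powr (p - 1) * v j * v j - \<bar>v j\<bar> powr (p - 1) * v j * t j)"
    unfolding sum_distrib_left by (intro sum.cong refl) (simp add: t algebra_simps)
  also have "\<dots> = (\<Sum>j<M. \<bar>v j\<bar> powr (p + 1)) - (\<Sum>j<M. \<bar>v j\<bar> powr (p - 1) * v j * t j)"
    by (simp add: sum_subtractf powr_abs_pred_mult_square)
  finally have "h * (\<tau> * (\<Sum>j<M. \<bar>v j\<bar> powr (p - 1) * v j * m j))
      = h * (\<Sum>j<M. \<bar>v j\<bar> powr (p + 1)) - X"
    unfolding X_def by (simp add: right_diff_distrib)
  then have "\<tau> * (h * (\<Sum>j<M. \<bar>v j\<bar> powr (p - 1) * v j * m j))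
      = h * (\<Sum>j<M. \<bar>v j\<bar> powr (p + 1)) - X"
    by (simp only: mult.left_commute)
  then have \<tau>_term: "\<tau> * (h * (\<Sum>j<M. \<bar>v j\<bar> powr (p - 1) * v j * m j)) = 1 - X"
    unfolding v .
  have "X \<le> h * (\<Sum>j<M. \<bar>v j\<bar> powr p * \<bar>t j\<bar>)"
    unfolding X_def using h by (intro mult_left_mono sum_mono powr_abs_pred_mult_le) auto
  also have "\<dots> \<le> N"
    unfolding N_def by (rule Holder_sum_powr_normalized[OF _ h p v]) simp
  finally have "X \<le> N" .
  have "E - 2 * \<tau> * E * (h * (\<Sum>j<M. \<bar>v j\<bar> powr (p - 1) * v j * m j))
      = E - 2 * E * (\<tau> * (h * (\<Sum>j<M. \<bar>v j\<bar> powr (p - 1) * v j * m j)))"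
    by (simp add: mult_ac)
  also have "\<dots> = E * (2 * X - 1)"
    unfolding \<tau>_term by (simp add: algebra_simps)
  also have "\<dots> \<le> E * (2 * N - 1)"
    using \<open>X \<le> N\<close> E by (simp add: mult_left_mono)
  also have "\<dots> \<le> E * N\<^sup>2"
  proof -
    have "2 * N - 1 \<le> N\<^sup>2"
      using zero_le_power2[of "N - 1"] by (simp add: power2_diff)
    then show ?thesis
      using E by (rule mult_left_mono)
  qed
  finally show ?thesis
    unfolding N_def .
qed

section \<open>The discrete energy\<close>

lemma hstep_nonneg: "0 \<le> L \<Longrightarrow> 0 \<le> hstep L M"
  unfolding hstep_def by simp

lemma normh_nonneg: "0 \<le> L \<Longrightarrow> 0 \<le> normh L M w"
  unfolding normh_def iph_def by (simp add: hstep_nonneg sum_nonneg)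

lemma normh_power2: "0 \<le> L \<Longrightarrow> (normh L M w)\<^sup>2 = hstep L M * (\<Sum>j<M. (w j)\<^sup>2)"
  unfolding normh_def iph_def
  by (simp add: hstep_nonneg sum_nonneg power2_eq_square)

lemma semi1h_sq_eq: "semi1h_sq x0 L M w = hstep L M * (\<Sum>j<M. (\<Sum>l<M. - Dxx x0 L M j l * w l) * w j)"
  unfolding semi1h_sq_def iph_def Dxx_app_def by (simp add: sum_negf)

lemma Qh_eq_quadratic_energy:
  assumes "0 \<le> L"
  shows "Qh x0 L M V \<omega> w
    = hstep L M * quadratic_energy M (\<lambda>j l. - Dxx x0 L M j l) (\<lambda>j. V (grid x0 L M j) + \<omega>) w"
  unfolding Qh_def semi1h_sq_eq normh_power2[OF assms] quadratic_energy_def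
  by (simp add: sum.distrib sum_divide_distrib sum_distrib_left distrib_right algebra_simps)

lemma Qh_cong:
  assumes "0 \<le> L" and "\<And>j. j < M \<Longrightarrow> w j = z j"
  shows "Qh x0 L M V \<omega> w = Qh x0 L M V \<omega> z"
  using quadratic_energy_cong[OF assms(2)] by (simp add: Qh_eq_quadratic_energy[OF assms(1)])

lemma Qh_eq_0: "0 \<le> L \<Longrightarrow> (\<And>j. j < M \<Longrightarrow> w j = 0) \<Longrightarrow> Qh x0 L M V \<omega> w = 0"
  using Qh_cong[of L M w "\<lambda>_. 0"] by (simp add: Qh_eq_quadratic_energy quadratic_energy_def)

lemma Qh_scale: "0 \<le> L \<Longrightarrow> Qh x0 L M V \<omega> (\<lambda>j. c * w j) = c\<^sup>2 * Qh x0 L M V \<omega> w"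
  unfolding Qh_eq_quadratic_energy quadratic_energy_scale by simp

lemma Qh_nonneg:
  assumes L: "0 < L" and V: "\<And>x. 0 \<le> V x" and A2': "- lambda0' x0 L M V < \<omega>"
  shows "0 \<le> Qh x0 L M V \<omega> w"
proof -
  have h: "0 \<le> hstep L M"
    using L by (simp add: hstep_nonneg)
  have potential_energy_nonneg: "0 \<le> Qh x0 L M V 0 z" for z
    unfolding Qh_def semi1h_sq_eq
    using h neg_Dxx_quadratic_form_nonneg[of x0 L M z] V by (simp add: sum_nonneg)
  have Qh_split: "Qh x0 L M V \<omega> w = Qh x0 L M V 0 w + \<omega> * (normh L M w)\<^sup>2"
    unfolding Qh_def by simp
  define s where "s = normh L M w"
  have "0 \<le> s"
    unfolding s_def using L by (simp add: normh_nonneg)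
  show ?thesis
  proof (cases "s = 0")
    case True
    then show ?thesis
      using Qh_split potential_energy_nonneg unfolding s_def by simp
  next
    case False
    with \<open>0 \<le> s\<close> have "0 < s" by simp
    have "(normh L M (\<lambda>j. (1 / s) * w j))\<^sup>2 = (1 / s)\<^sup>2 * (normh L M w)\<^sup>2"
      unfolding normh_power2[OF less_imp_le[OF L]]
      by (simp add: power_mult_distrib power_divide sum_distrib_left mult_ac)
    also have "\<dots> = 1"
      using \<open>0 < s\<close> unfolding s_def by (simp add: power_divide)
    finally have "(normh L M (\<lambda>j. (1 / s) * w j))\<^sup>2 = 1" .
    then have "normh L M (\<lambda>j. (1 / s) * w j) = 1"
      using normh_nonneg[of L M "\<lambda>j. (1 / s) * w j"] L by (auto simp: power2_eq_1_iff)
    moreover have "bdd_below {Qh x0 L M V 0 u | u. normh L M u = 1}"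
      using potential_energy_nonneg by (intro bdd_belowI[of _ 0]) blast
    moreover have "lambda0' x0 L M V = Inf {Qh x0 L M V 0 u | u. normh L M u = 1}"
      unfolding lambda0'_def Qh_def by simp
    ultimately have "lambda0' x0 L M V \<le> Qh x0 L M V 0 (\<lambda>j. (1 / s) * w j)"
      by (auto intro: cInf_lower)
    also have "\<dots> = Qh x0 L M V 0 w / s\<^sup>2"
      using L Qh_scale[of L x0 M V 0 "1 / s" w] by (simp add: power_divide)
    finally have "lambda0' x0 L M V * s\<^sup>2 \<le> Qh x0 L M V 0 w"
      using \<open>0 < s\<close> by (simp add: field_simps)
    moreover have "0 \<le> lambda0' x0 L M V * s\<^sup>2 + \<omega> * s\<^sup>2"
      using A2' mult_right_mono[of 0 "lambda0' x0 L M V + \<omega>" "s\<^sup>2"] by (simp add: distrib_right)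
    ultimately show ?thesis
      using Qh_split unfolding s_def by linarith
  qed
qed

lemma norm1h_sq_eq:
  "0 \<le> L \<Longrightarrow> norm1h_sq x0 L M w
     = hstep L M * ((\<Sum>j<M. (w j)\<^sup>2) + (\<Sum>j<M. (\<Sum>l<M. - Dxx x0 L M j l * w l) * w j))"
  unfolding norm1h_sq_def normh_power2 semi1h_sq_eq by (simp add: distrib_left)

lemma normhq_powr: "0 \<le> L \<Longrightarrow> 0 < q \<Longrightarrow> normhq L M q w powr q = hstep L M * (\<Sum>j<M. \<bar>w j\<bar> powr q)"
  unfolding normhq_def by (simp add: powr_powr hstep_nonneg sum_nonneg)

lemma normhq_divide:
  assumes "0 \<le> L" and "0 < q" and "0 < c"
  shows "normhq L M q (\<lambda>j. w j / c) = normhq L M q w / c"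
  using assms unfolding normhq_def
  by (simp add: abs_divide powr_divide sum_divide_distrib[symmetric] powr_powr hstep_nonneg
      sum_nonneg)

text \<open>Division by a vanishing norm gives the zero vector (x / 0 = 0), so normalised iterates
  are unit vectors or zero.\<close>

lemma normhq_normalized:
  assumes "0 \<le> L" and "0 < q" and w: "\<And>j. j < M \<Longrightarrow> w j = t j / normhq L M q t"
  shows "normhq L M q w = 1 \<or> (\<forall>j<M. w j = 0)"
proof (cases "normhq L M q t = 0")
  case False
  then have "0 < normhq L M q t"
    unfolding normhq_def by simp
  have "(\<Sum>j<M. \<bar>w j\<bar> powr q) = (\<Sum>j<M. \<bar>t j / normhq L M q t\<bar> powr q)"
    using w by (intro sum.cong) auto
  then have "normhq L M q w = normhq L M q (\<lambda>j. t j / normhq L M q t)"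
    unfolding normhq_def by simp
  then show ?thesis
    using normhq_divide[OF assms(1,2) \<open>0 < normhq L M q t\<close>] False by simp
qed (simp add: w)

lemma lambda_tilde_term_le:
  assumes L: "0 < L" and M: "0 < M" and p: "0 < p" and V: "\<And>x. 0 \<le> V x"
    and A2': "- lambda0' x0 L M V < \<omega>"
    and v: "normhq L M (p + 1) v = 1 \<or> (\<forall>j<M. v j = 0)"
    and t: "\<And>j. j < M \<Longrightarrow> t j = v j - \<tau> * m j"
  shows "Qh x0 L M V \<omega> v
      - 2 * \<tau> * lambda_tilde x0 L M V \<omega> p v * (hstep L M * (\<Sum>j<M. \<bar>v j\<bar> powr (p - 1) * v j * m j))
      \<le> Qh x0 L M V \<omega> v * (normhq L M (p + 1) t)\<^sup>2"
  using v
proof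
  assume "normhq L M (p + 1) v = 1"
  then have v_unit: "hstep L M * (\<Sum>j<M. \<bar>v j\<bar> powr (p + 1)) = 1"
    using normhq_powr[of L "p + 1" M v] L p by simp
  have "lambda_tilde x0 L M V \<omega> p v = Qh x0 L M V \<omega> v"
    unfolding lambda_tilde_def \<open>normhq L M (p + 1) v = 1\<close> by simp
  moreover have "0 < hstep L M"
    using L M by (simp add: hstep_def)
  ultimately show ?thesis
    using multiplier_term_le[OF _ p v_unit Qh_nonneg[OF L V A2'] t]
    unfolding normhq_def by simp
next
  assume "\<forall>j<M. v j = 0"
  then show ?thesis
    using Qh_eq_0[of L M v] L by simp
qed

section \<open>Energy decay of the fully discrete GFALM\<close>

lemma Qh_GFALM_step_unnormalized:
  assumes L: "0 < L" and M: "0 < M" and p: "0 < p" and V: "\<And>x. 0 \<le> V x"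
    and A2': "- lambda0' x0 L M V < \<omega>"
    and \<alpha>: "\<And>j. j < M \<Longrightarrow> V (grid x0 L M j) + \<omega> + 1 \<le> 2 * \<alpha>"
    and v: "normhq L M (p + 1) v = 1 \<or> (\<forall>j<M. v j = 0)"
    and t: "\<And>j. j < M \<Longrightarrow> t j = v j - \<tau> * m j"
    and m: "\<And>j. j < M \<Longrightarrow> m j = - Dxx_app x0 L M t j / 2
        + (V (grid x0 L M j) + \<omega> - lambda_tilde x0 L M V \<omega> p v * \<bar>v j\<bar> powr (p - 1)) * v j
        + \<alpha> * (t j - v j)"
  shows "Qh x0 L M V \<omega> t \<le> Qh x0 L M V \<omega> v * (normhq L M (p + 1) t)\<^sup>2
      - (\<tau>\<^sup>2 * norm1h_sq x0 L M m + 4 * \<tau> * (normh L M m)\<^sup>2) / 2"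
proof -
  define K where "K = (\<lambda>j l. - Dxx x0 L M j l)"
  define W where "W = (\<lambda>j. V (grid x0 L M j) + \<omega>)"
  define lam where "lam = lambda_tilde x0 L M V \<omega> p v"
  define g where "g j = lam * (\<bar>v j\<bar> powr (p - 1) * v j)" for j
  have K_sym: "K j l = K l j" for j l
    unfolding K_def by (simp add: Dxx_commute)
  have m': "m j = (\<Sum>l<M. K j l * t l) / 2 + W j * v j - g j + \<alpha> * (t j - v j)" if "j < M" for j
    using m[OF that] unfolding K_def W_def g_def lam_def Dxx_app_def by (simp add: sum_negf algebra_simps)
  have "hstep L M * quadratic_energy M K W t \<le> hstep L M * (quadratic_energy M K W v
      - (\<tau>\<^sup>2 * ((\<Sum>j<M. (m j)\<^sup>2) + (\<Sum>j<M. (\<Sum>l<M. K j l * m l) * m j)) + 4 * \<tau> * (\<Sum>j<M. (m j)\<^sup>2)) / 2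
      - 2 * \<tau> * (\<Sum>j<M. g j * m j))"
    using quadratic_energy_step_le[OF K_sym t m'] \<alpha> L unfolding W_def
    by (intro mult_left_mono) (simp_all add: hstep_nonneg)
  then have "Qh x0 L M V \<omega> t \<le> Qh x0 L M V \<omega> v
      - (\<tau>\<^sup>2 * norm1h_sq x0 L M m + 4 * \<tau> * (normh L M m)\<^sup>2) / 2
      - 2 * \<tau> * lam * (hstep L M * (\<Sum>j<M. \<bar>v j\<bar> powr (p - 1) * v j * m j))"
    unfolding Qh_eq_quadratic_energy[OF less_imp_le[OF L]] norm1h_sq_eq[OF less_imp_le[OF L]]
      normh_power2[OF less_imp_le[OF L]] g_def K_def W_def
    by (simp add: algebra_simps sum_distrib_left)
  then show ?thesis
    using lambda_tilde_term_le[OF L M p V A2' v t] unfolding lam_def by linarith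
qed

lemma Qh_GFALM_step:
  assumes L: "0 < L" and M: "0 < M" and p: "0 < p" and V: "\<And>x. 0 \<le> V x"
    and A2': "- lambda0' x0 L M V < \<omega>"
    and \<alpha>: "\<And>j. j < M \<Longrightarrow> V (grid x0 L M j) + \<omega> + 1 \<le> 2 * \<alpha>"
    and v: "normhq L M (p + 1) v = 1 \<or> (\<forall>j<M. v j = 0)"
    and t: "\<And>j. j < M \<Longrightarrow> t j = v j - \<tau> * m j"
    and m: "\<And>j. j < M \<Longrightarrow> m j = - Dxx_app x0 L M t j / 2
        + (V (grid x0 L M j) + \<omega> - lambda_tilde x0 L M V \<omega> p v * \<bar>v j\<bar> powr (p - 1)) * v j
        + \<alpha> * (t j - v j)"
  shows "Qh x0 L M V \<omega> (\<lambda>j. t j / normhq L M (p + 1) t) - Qh x0 L M V \<omega> v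
      \<le> - (\<tau>\<^sup>2 * norm1h_sq x0 L M m + 4 * \<tau> * (normh L M m)\<^sup>2) / (2 * (normhq L M (p + 1) t)\<^sup>2)"
proof (cases "normhq L M (p + 1) t = 0")
  case True
  then show ?thesis
    using Qh_eq_0[of L M "\<lambda>_. 0"] Qh_nonneg[OF L V A2', of v] L by simp
next
  case False
  define N where "N = normhq L M (p + 1) t"
  have "0 < N"
    using False unfolding N_def normhq_def by simp
  have "Qh x0 L M V \<omega> (\<lambda>j. t j / N) = Qh x0 L M V \<omega> t / N\<^sup>2"
    using Qh_scale[of L x0 M V \<omega> "1 / N" t] L by (simp add: power_divide)
  moreover have "Qh x0 L M V \<omega> t \<le> Qh x0 L M V \<omega> v * N\<^sup>2
      - (\<tau>\<^sup>2 * norm1h_sq x0 L M m + 4 * \<tau> * (normh L M m)\<^sup>2) / 2"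
    unfolding N_def by (rule Qh_GFALM_step_unnormalized[OF assms])
  ultimately show ?thesis
    using \<open>0 < N\<close> unfolding N_def[symmetric] by (simp add: field_simps)
qed

theorem mainTheorem15:
  fixes x0 L \<omega> p \<alpha> \<tau> :: real and M :: nat and V :: "real \<Rightarrow> real"
    and u ut mu :: "nat \<Rightarrow> nat \<Rightarrow> real" and n :: nat
  assumes L_pos: "L > 0" and M_pos: "M > 0" and M_even: "even M"
    and A1_p: "1 < p" and A1_V_nonneg: "\<And>x. V x \<ge> 0" and A1_V_bdd: "\<exists>B. \<forall>x. \<bar>V x\<bar> \<le> B"
    and A2': "\<omega> > - lambda0' x0 L M V"
    and alpha: "\<alpha> \<ge> max 0 (Max ((\<lambda>j. V (grid x0 L M j) + \<omega>) ` {..<M})) / 2 + 1 / 2"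
    and tau: "\<tau> > 0"
    and init: "normhq L M (p + 1) (u 0) = 1"
    and step: "\<And>k j. j < M \<Longrightarrow> (ut (Suc k) j - u k j) / \<tau> = - mu (Suc k) j"
    and mu_def: "\<And>k j. j < M \<Longrightarrow> mu (Suc k) j =
        - Dxx_app x0 L M (ut (Suc k)) j / 2
        + (V (grid x0 L M j) + \<omega> - lambda_tilde x0 L M V \<omega> p (u k) * \<bar>u k j\<bar> powr (p - 1)) * u k j
        + \<alpha> * (ut (Suc k) j - u k j)"
    and normalize: "\<And>k j. j < M \<Longrightarrow> u (Suc k) j = ut (Suc k) j / normhq L M (p + 1) (ut (Suc k))"
  shows "Qh x0 L M V \<omega> (u (Suc n)) - Qh x0 L M V \<omega> (u n)
         \<le> - (\<tau>\<^sup>2 * norm1h_sq x0 L M (mu (Suc n)) + 4 * \<tau> * (normh L M (mu (Suc n)))\<^sup>2)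
             / (2 * (normhq L M (p + 1) (ut (Suc n)))\<^sup>2)"
proof -
  have "0 \<le> L"
    using L_pos by simp
  have iterate_normalized: "normhq L M (p + 1) (u k) = 1 \<or> (\<forall>j<M. u k j = 0)" for k
  proof (cases k)
    case (Suc k')
    show ?thesis
      unfolding Suc using A1_p normalize
      by (intro normhq_normalized[OF \<open>0 \<le> L\<close>, where t = "ut (Suc k')"]) auto
  qed (simp add: init)
  have \<alpha>: "V (grid x0 L M j) + \<omega> + 1 \<le> 2 * \<alpha>" if "j < M" for j
  proof -
    have "V (grid x0 L M j) + \<omega> \<le> Max ((\<lambda>j. V (grid x0 L M j) + \<omega>) ` {..<M})"
      using that by (intro Max_ge) auto
    then show ?thesis
      using alpha by linarith
  qed
  have t: "ut (Suc n) j = u n j - \<tau> * mu (Suc n) j" if "j < M" for j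
    using step[OF that] tau by (simp add: field_simps)
  have "Qh x0 L M V \<omega> (u (Suc n))
      = Qh x0 L M V \<omega> (\<lambda>j. ut (Suc n) j / normhq L M (p + 1) (ut (Suc n)))"
    using normalize by (intro Qh_cong[OF \<open>0 \<le> L\<close>]) simp
  then show ?thesis
    using Qh_GFALM_step[OF L_pos M_pos _ A1_V_nonneg A2' \<alpha> iterate_normalized t mu_def] A1_p
    by simp
qed

end
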